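(* Let $A$ be a UFD containing $\mathbb{Q}$, $K=\operatorname{frac}(A)$, $B=A^{[n]}$ and $D\in\operatorname{LND}_A(B)$. Let $D_K$ be the extension of $D$ to $K^{[n]}$. If $D$ is irreducible, then $D_K$ is irreducible.
   Context: $A^{[n]}$ denotes the polynomial ring in $n$ variables over $A$; $\operatorname{LND}_A(B)$ is the set of locally nilpotent $A$-derivations of $B$. A derivation $D$ of a domain $R$ is reducible if $D(R)\subset fR$ for some non-unit $f\in R$, and irreducible otherwise. *)

theory Defs
  imports "HOL-Library.Poly_Mapping" "HOL-Computational_Algebra.Fraction_Field"
    "HOL-Computational_Algebra.Factorial_Ring"
begin

text \<open>Polynomials with coefficients in 'b in the variables x_0, x_1, ...:
  finitely supported maps from monomials (exponent vectors) to coefficients.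
  The polynomial ring R^[n] is the subring of those involving only x_0..x_(n-1).\<close>

type_synonym 'b mpoly = "(nat \<Rightarrow>\<^sub>0 nat) \<Rightarrow>\<^sub>0 'b"

definition polys :: "nat \<Rightarrow> ('b::comm_ring_1) mpoly set" where
  "polys n = {p. \<forall>m \<in> Poly_Mapping.keys p. \<forall>i \<in> Poly_Mapping.keys m. i < n}"

definition mconst :: "'b::comm_ring_1 \<Rightarrow> 'b mpoly" where
  "mconst c = Poly_Mapping.single 0 c"

definition is_R_derivation :: "nat \<Rightarrow> (('b::comm_ring_1) mpoly \<Rightarrow> 'b mpoly) \<Rightarrow> bool" where
  "is_R_derivation n D \<longleftrightarrow>
     (\<forall>f \<in> polys n. D f \<in> polys n) \<and>
     (\<forall>f \<in> polys n. \<forall>g \<in> polys n. D (f + g) = D f + D g) \<and>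
     (\<forall>f \<in> polys n. \<forall>g \<in> polys n. D (f * g) = f * D g + g * D f) \<and>
     (\<forall>c. D (mconst c) = 0)"

definition is_LND :: "nat \<Rightarrow> (('b::comm_ring_1) mpoly \<Rightarrow> 'b mpoly) \<Rightarrow> bool" where
  "is_LND n D \<longleftrightarrow> is_R_derivation n D \<and> (\<forall>f \<in> polys n. \<exists>k. (D ^^ k) f = 0)"

definition reducible_der :: "nat \<Rightarrow> (('b::comm_ring_1) mpoly \<Rightarrow> 'b mpoly) \<Rightarrow> bool" where
  "reducible_der n D \<longleftrightarrow>
     (\<exists>f \<in> polys n. \<not> (\<exists>u \<in> polys n. f * u = 1) \<and>
        (\<forall>g \<in> polys n. \<exists>h \<in> polys n. D g = f * h))"

definition irreducible_der :: "nat \<Rightarrow> (('b::comm_ring_1) mpoly \<Rightarrow> 'b mpoly) \<Rightarrow> bool" where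
  "irreducible_der n D \<longleftrightarrow> \<not> reducible_der n D"

definition to_K :: "('a::idom) mpoly \<Rightarrow> 'a fract mpoly" where
  "to_K p = Poly_Mapping.map (\<lambda>a. Fract a 1) p"

end

theory Submission
  imports Defs
begin

text \<open>Clearing denominators and dividing out the content writes a nonzero f of K^[n] as
  c * g with c a nonzero constant and g in A^[n] primitive. If D_K maps K^[n] into
  f K^[n], then for every p in A^[n] we get D p = g * h with h in K^[n], and Gauss's
  lemma (a prime dividing all coefficients of a product divides all coefficients of
  one factor) puts h in A^[n]. As g is a non-unit of A^[n] whenever f is a non-unit
  of K^[n], D is reducible.\<close>

lemma lookup_mconst_mult: "Poly_Mapping.lookup (mconst c * p) k = c * Poly_Mapping.lookup p k"
  unfolding mconst_def mult_map_scale_conv_mult[symmetric] by (simp add: map.rep_eq when_def)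

lemma mconst_mult: "mconst a * mconst b = mconst (a * b)"
  unfolding mconst_def by (simp add: mult_single)

lemma mconst_1 [simp]: "mconst 1 = 1"
  unfolding mconst_def by simp

lemma mconst_eq_0_iff [simp]: "mconst c = 0 \<longleftrightarrow> c = 0"
  unfolding mconst_def by (metis lookup_single_eq lookup_zero single_zero)

lemma mconst_polys: "mconst c \<in> polys n"
  unfolding polys_def mconst_def by simp

lemma polys_mult:
  assumes "p \<in> polys n" "q \<in> polys n"
  shows "p * q \<in> polys n"
  unfolding polys_def
proof (intro CollectI ballI)
  fix m i assume m: "m \<in> Poly_Mapping.keys (p * q)" and i: "i \<in> Poly_Mapping.keys m"
  have "m \<in> {a + b | a b. a \<in> Poly_Mapping.keys p \<and> b \<in> Poly_Mapping.keys q}"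
    using keys_mult m by (rule subsetD)
  then obtain a b where ab: "m = a + b" "a \<in> Poly_Mapping.keys p" "b \<in> Poly_Mapping.keys q"
    by blast
  have "i \<in> Poly_Mapping.keys a \<union> Poly_Mapping.keys b"
    using i keys_add[of a b] ab(1) by blast
  then show "i < n"
    using assms ab(2,3) unfolding polys_def by blast
qed

lemma lookup_to_K: "Poly_Mapping.lookup (to_K p) k = Fract (Poly_Mapping.lookup p k) 1"
  unfolding to_K_def by (simp add: map.rep_eq when_def fract_collapse)

lemma Fract_1_eq_0_iff [simp]: "Fract (a::'a::idom) 1 = 0 \<longleftrightarrow> a = 0"
  by (simp add: Zero_fract_def eq_fract)

lemma Fract_1_add: "Fract ((a::'a::idom) + b) 1 = Fract a 1 + Fract b 1"
  by simp

lemma Fract_1_mult: "Fract ((a::'a::idom) * b) 1 = Fract a 1 * Fract b 1"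
  by simp

lemma Fract_sum: "Fract (sum h S) 1 = (\<Sum>x\<in>S. Fract (h x) 1)"
  by (induction S rule: infinite_finite_induct) (simp_all add: fract_collapse Fract_1_add del: add_fract)

lemma keys_to_K [simp]: "Poly_Mapping.keys (to_K p) = Poly_Mapping.keys p"
  by (simp add: in_keys_iff lookup_to_K set_eq_iff)

lemma to_K_polys_iff [simp]: "to_K p \<in> polys n \<longleftrightarrow> p \<in> polys n"
  by (simp add: polys_def)

lemma to_K_inject: "to_K p = to_K q \<longleftrightarrow> p = q"
  by (metis poly_mapping_eqI lookup_to_K eq_fract(1) one_neq_zero mult_1_right)

lemma to_K_mconst: "to_K (mconst c) = mconst (Fract c 1)"
  by (rule poly_mapping_eqI) (simp add: lookup_to_K mconst_def lookup_single when_def fract_collapse)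

lemma to_K_0 [simp]: "to_K 0 = 0"
  using to_K_mconst[of 0] by (simp add: mconst_def fract_collapse)

lemma to_K_1 [simp]: "to_K 1 = 1"
  using to_K_mconst[of 1] by (simp add: fract_collapse)

lemma lookup_mult_keys:
  "Poly_Mapping.lookup (f * g) k =
     (\<Sum>(l, r) \<in> Poly_Mapping.keys f \<times> Poly_Mapping.keys g.
        Poly_Mapping.lookup f l * Poly_Mapping.lookup g r when k = l + r)"
proof -
  have keys_g: "(\<Sum>r. Poly_Mapping.lookup g r when k = l + r) =
      (\<Sum>r\<in>Poly_Mapping.keys g. Poly_Mapping.lookup g r when k = l + r)" for l
    by (rule Sum_any.expand_superset) (auto simp: in_keys_iff)
  have "Poly_Mapping.lookup (f * g) k = (\<Sum>l\<in>Poly_Mapping.keys f.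
      Poly_Mapping.lookup f l * (\<Sum>r\<in>Poly_Mapping.keys g. Poly_Mapping.lookup g r when k = l + r))"
    unfolding lookup_mult keys_g by (rule Sum_any.expand_superset) (auto simp: in_keys_iff)
  also have "\<dots> = (\<Sum>(l, r) \<in> Poly_Mapping.keys f \<times> Poly_Mapping.keys g.
      Poly_Mapping.lookup f l * Poly_Mapping.lookup g r when k = l + r)"
    by (simp only: sum_distrib_left mult_when sum.cartesian_product)
  finally show ?thesis .
qed

lemma to_K_mult: "to_K (f * g) = to_K f * to_K g"
  by (rule poly_mapping_eqI, unfold lookup_mult_keys lookup_to_K keys_to_K Fract_sum)
    (rule sum.cong, auto simp: when_def fract_collapse Fract_1_mult simp del: mult_fract)

definition coeffs_dvd :: "'b::comm_semiring_1 \<Rightarrow> ('m \<Rightarrow>\<^sub>0 'b) \<Rightarrow> bool" where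
  "coeffs_dvd q f \<longleftrightarrow> (\<forall>k. q dvd Poly_Mapping.lookup f k)"

definition primitive_mpoly :: "'a::{factorial_semiring, idom} mpoly \<Rightarrow> bool" where
  "primitive_mpoly f \<longleftrightarrow> (\<forall>q. prime q \<longrightarrow> \<not> coeffs_dvd q f)"

lemma add_eq_imp_less_or_less:
  fixes a b l r :: "'m::{ordered_cancel_comm_monoid_add, linorder}"
  assumes "l + r = a + b" "(l, r) \<noteq> (a, b)"
  shows "a < l \<or> b < r"
proof (rule ccontr)
  assume "\<not> (a < l \<or> b < r)"
  then have "l \<le> a" "r \<le> b" by (simp_all add: not_less)
  with assms have "l < a \<or> r < b" by auto
  with \<open>l \<le> a\<close> \<open>r \<le> b\<close> have "l + r < a + b"
    by (auto intro: add_less_le_mono add_le_less_mono)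
  with assms(1) show False by simp
qed

lemma dvd_lookup_mult_at_top_iff:
  fixes f g :: "('m::{ordered_cancel_comm_monoid_add, linorder}) \<Rightarrow>\<^sub>0 'b::comm_semiring_1_cancel"
  assumes f_top: "\<forall>l > a. q dvd Poly_Mapping.lookup f l"
    and g_top: "\<forall>r > b. q dvd Poly_Mapping.lookup g r"
  shows "q dvd Poly_Mapping.lookup (f * g) (a + b) \<longleftrightarrow>
           q dvd Poly_Mapping.lookup f a * Poly_Mapping.lookup g b"
proof -
  define T where "T = Poly_Mapping.keys f \<times> Poly_Mapping.keys g"
  define P where "P = (\<lambda>(l, r). Poly_Mapping.lookup f l * Poly_Mapping.lookup g r when a + b = l + r)"
  have "Poly_Mapping.lookup (f * g) (a + b) = sum P (insert (a, b) T)"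
    unfolding lookup_mult_keys P_def T_def
    by (rule sum.mono_neutral_left) (auto simp: in_keys_iff)
  also have "\<dots> = P (a, b) + sum P (T - {(a, b)})"
    by (simp add: T_def sum.insert_remove)
  finally have split: "Poly_Mapping.lookup (f * g) (a + b) = P (a, b) + sum P (T - {(a, b)})" .
  have "q dvd P (l, r)" if "(l, r) \<noteq> (a, b)" for l r
  proof (cases "l + r = a + b")
    case True
    then have "a < l \<or> b < r"
      using that by (rule add_eq_imp_less_or_less)
    with f_top g_top show ?thesis
      by (auto simp: P_def True)
  qed (auto simp: P_def)
  then have "q dvd sum P (T - {(a, b)})"
    by (intro dvd_sum) auto
  then show ?thesis
    unfolding split by (simp add: dvd_add_left_iff P_def)
qed

lemma exists_top_coeff_not_dvd:
  fixes f :: "('m::linorder) \<Rightarrow>\<^sub>0 'b::comm_semiring_1"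
  assumes "\<not> coeffs_dvd q f"
  obtains a where "\<not> q dvd Poly_Mapping.lookup f a" "\<forall>l > a. q dvd Poly_Mapping.lookup f l"
proof -
  define S where "S = {l. \<not> q dvd Poly_Mapping.lookup f l}"
  have "S \<subseteq> Poly_Mapping.keys f"
    by (auto simp: S_def in_keys_iff)
  then have "finite S" by (rule finite_subset) simp
  moreover have "S \<noteq> {}"
    using assms by (auto simp: S_def coeffs_dvd_def)
  ultimately have "Max S \<in> S" "\<forall>l > Max S. l \<notin> S"
    by (auto dest: Max_ge)
  then show thesis
    using that unfolding S_def by blast
qed

lemma prime_elem_coeffs_dvd_mult:
  fixes f g :: "('m::{ordered_cancel_comm_monoid_add, linorder}) \<Rightarrow>\<^sub>0 'b::comm_semiring_1_cancel"
  assumes "prime_elem q" "coeffs_dvd q (f * g)"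
  shows "coeffs_dvd q f \<or> coeffs_dvd q g"
proof (rule ccontr)
  assume "\<not> (coeffs_dvd q f \<or> coeffs_dvd q g)"
  then obtain a b where
    "\<not> q dvd Poly_Mapping.lookup f a" "\<forall>l > a. q dvd Poly_Mapping.lookup f l"
    "\<not> q dvd Poly_Mapping.lookup g b" "\<forall>r > b. q dvd Poly_Mapping.lookup g r"
    by (meson exists_top_coeff_not_dvd)
  moreover have "q dvd Poly_Mapping.lookup (f * g) (a + b)"
    using assms(2) by (simp add: coeffs_dvd_def)
  ultimately show False
    using assms(1) dvd_lookup_mult_at_top_iff prime_elem_dvd_mult_iff by metis
qed

lemma coeffs_dvd_mconst_mult: "q dvd c \<Longrightarrow> coeffs_dvd q (mconst c * p)"
  by (simp add: coeffs_dvd_def lookup_mconst_mult)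

lemma coeffs_dvd_imp_mconst_dvd:
  fixes f :: "'b::{idom, algebraic_semidom} mpoly"
  assumes "coeffs_dvd q f"
  shows "mconst q dvd f"
proof
  show "f = mconst q * Poly_Mapping.map (\<lambda>a. a div q) f"
  proof (rule poly_mapping_eqI)
    fix k
    have dvd: "q dvd Poly_Mapping.lookup f k"
      using assms by (simp add: coeffs_dvd_def)
    show "Poly_Mapping.lookup f k = Poly_Mapping.lookup (mconst q * Poly_Mapping.map (\<lambda>a. a div q) f) k"
      by (simp add: lookup_mconst_mult map.rep_eq when_def dvd)
  qed
qed

lemma primitive_part_exists:
  fixes f :: "'a::{factorial_semiring, idom} mpoly"
  assumes "f \<noteq> 0"
  obtains u g where "u \<noteq> 0" "f = mconst u * g" "primitive_mpoly g"
proof -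
  obtain m where "Poly_Mapping.lookup f m \<noteq> 0"
    using assms by (metis poly_mapping_eqI lookup_zero)
  moreover have "\<exists>u g. u \<noteq> 0 \<and> f = mconst u * g \<and> primitive_mpoly g"
    if "Poly_Mapping.lookup f m \<noteq> 0" for f :: "'a mpoly"
    using that
  proof (induction "size (prime_factorization (Poly_Mapping.lookup f m))" arbitrary: f rule: less_induct)
    case less
    show ?case
    proof (cases "primitive_mpoly f")
      case True
      then show ?thesis by (intro exI[of _ 1] exI[of _ f]) simp
    next
      case False
      then obtain q where q: "prime q" "coeffs_dvd q f"
        by (auto simp: primitive_mpoly_def)
      then obtain f' where f: "f = mconst q * f'"
        using coeffs_dvd_imp_mconst_dvd by blast
      have coeff: "Poly_Mapping.lookup f m = q * Poly_Mapping.lookup f' m"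
        by (simp add: f lookup_mconst_mult)
      with less.prems have "Poly_Mapping.lookup f' m \<noteq> 0" by auto
      moreover have "size (prime_factorization (Poly_Mapping.lookup f' m)) <
          size (prime_factorization (Poly_Mapping.lookup f m))"
        using q(1) less.prems \<open>Poly_Mapping.lookup f' m \<noteq> 0\<close>
        by (simp add: coeff prime_factorization_mult prime_factorization_prime)
      ultimately obtain u g where "u \<noteq> 0" "f' = mconst u * g" "primitive_mpoly g"
        using less.hyps by blast
      then show ?thesis
        using q(1) by (intro exI[of _ "q * u"] exI[of _ g]) (auto simp: f mconst_mult mult.assoc)
    qed
  qed
  ultimately show thesis
    using that by blast
qed

lemma to_K_clear_denominators:
  fixes h :: "'a::idom fract mpoly"
  obtains d p where "d \<noteq> 0" "to_K p = mconst (Fract d 1) * h"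
proof -
  have "\<exists>a b. b \<noteq> 0 \<and> Poly_Mapping.lookup h k = Fract a b" for k
    by (cases "Poly_Mapping.lookup h k") auto
  then obtain N B where NB: "\<And>k. B k \<noteq> 0" "\<And>k. Poly_Mapping.lookup h k = Fract (N k) (B k)"
    by metis
  define d where "d = (\<Prod>k\<in>Poly_Mapping.keys h. B k)"
  define e where "e k = (\<Prod>j\<in>Poly_Mapping.keys h - {k}. B j)" for k
  have d_split: "d = B k * e k" if "k \<in> Poly_Mapping.keys h" for k
    using that by (simp add: d_def e_def prod.remove)
  have "to_K (Poly_Mapping.mapp (\<lambda>k _. e k * N k) h) = mconst (Fract d 1) * h"
  proof (rule poly_mapping_eqI)
    fix k
    show "Poly_Mapping.lookup (to_K (Poly_Mapping.mapp (\<lambda>k _. e k * N k) h)) k =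
        Poly_Mapping.lookup (mconst (Fract d 1) * h) k"
    proof (cases "k \<in> Poly_Mapping.keys h")
      case True
      have "Fract (e k * N k) 1 = Fract (B k * e k) 1 * Fract (N k) (B k)"
        using NB(1)[of k] by (simp add: eq_fract algebra_simps)
      with True show ?thesis
        by (simp add: lookup_to_K lookup_mapp lookup_mconst_mult NB(2) d_split del: mult_fract)
    next
      case False
      then show ?thesis
        by (simp add: lookup_to_K lookup_mapp lookup_mconst_mult in_keys_iff fract_collapse)
    qed
  qed
  moreover have "d \<noteq> 0"
    using NB(1) by (simp add: d_def)
  ultimately show thesis
    using that by blast
qed

lemma primitive_mpoly_divide_out_prime:
  fixes f :: "'a::{factorial_semiring, idom} mpoly"
  assumes prim: "primitive_mpoly f" and quot: "to_K f * h = to_K p"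
    and q: "prime q" and h0: "to_K h0 = mconst (Fract (q * x) 1) * h"
  obtains h1 where "to_K h1 = mconst (Fract x 1) * h"
proof -
  have "to_K (f * h0) = mconst (Fract (q * x) 1) * (to_K f * h)"
    by (simp only: to_K_mult h0 mult.left_commute)
  also have "\<dots> = to_K (mconst (q * x) * p)"
    by (simp only: quot to_K_mult to_K_mconst)
  finally have "f * h0 = mconst (q * x) * p"
    unfolding to_K_inject .
  then have "coeffs_dvd q (f * h0)"
    by (simp only: coeffs_dvd_mconst_mult dvd_triv_left)
  moreover have "\<not> coeffs_dvd q f"
    using prim q by (simp add: primitive_mpoly_def)
  ultimately have "coeffs_dvd q h0"
    using prime_elem_coeffs_dvd_mult q by blast
  then obtain h1 where h1: "h0 = mconst q * h1"
    using coeffs_dvd_imp_mconst_dvd by blast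
  have "mconst (Fract q 1) * to_K h1 = to_K h0"
    by (simp only: h1 to_K_mult to_K_mconst)
  also have "\<dots> = mconst (Fract q 1) * (mconst (Fract x 1) * h)"
    by (simp only: h0 Fract_1_mult mconst_mult[symmetric] mult.assoc)
  finally have "to_K h1 = mconst (Fract x 1) * h"
    using q by (simp del: mult_fract)
  then show thesis
    by (rule that)
qed

lemma primitive_mpoly_gauss:
  fixes f :: "'a::{factorial_semiring, idom} mpoly"
  assumes "primitive_mpoly f" "to_K f * h = to_K p"
  shows "h \<in> range to_K"
proof -
  obtain d h0 where "d \<noteq> 0" "to_K h0 = mconst (Fract d 1) * h"
    by (rule to_K_clear_denominators)
  moreover have "h \<in> range to_K" if "d \<noteq> 0" "to_K h0 = mconst (Fract d 1) * h" for d h0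
    using that
  proof (induction d arbitrary: h0 rule: prime_divisors_induct)
    case (unit u)
    from \<open>is_unit u\<close> obtain v where "1 = u * v"
      by (rule dvdE)
    have "to_K (mconst v * h0) = mconst (Fract v 1) * (mconst (Fract u 1) * h)"
      by (simp only: to_K_mult to_K_mconst unit.prems(2))
    also have "\<dots> = mconst (Fract (u * v) 1) * h"
      by (simp only: mult.assoc[symmetric] mconst_mult Fract_1_mult mult.commute[of "Fract v 1"])
    also have "\<dots> = h"
      by (simp add: \<open>1 = u * v\<close>[symmetric] fract_collapse)
    finally show ?case
      by (metis rangeI)
  next
    case (factor q x)
    then obtain h1 where "to_K h1 = mconst (Fract x 1) * h"
      using primitive_mpoly_divide_out_prime assms by metis
    then show ?case
      using factor by simp
  qed simp
  ultimately show ?thesis by blast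
qed

lemma to_K_primitive_associate:
  fixes f :: "'a::{factorial_semiring, idom} fract mpoly"
  assumes "f \<noteq> 0"
  obtains g c where "c \<noteq> 0" "primitive_mpoly g" "to_K g = mconst c * f"
proof -
  obtain d p where d: "d \<noteq> 0" "to_K p = mconst (Fract d 1) * f"
    by (rule to_K_clear_denominators)
  with assms have "p \<noteq> 0"
    by auto
  then obtain u g where u: "u \<noteq> 0" "p = mconst u * g" "primitive_mpoly g"
    by (rule primitive_part_exists)
  have "mconst (Fract u 1) * to_K g = to_K p"
    by (simp only: u(2) to_K_mult to_K_mconst)
  also have "\<dots> = mconst (Fract u 1 * Fract d u) * f"
  proof -
    have "Fract d 1 = Fract u 1 * Fract d u"
      using u(1) by (simp add: eq_fract)
    then show ?thesis
      by (simp only: d(2))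
  qed
  also have "\<dots> = mconst (Fract u 1) * (mconst (Fract d u) * f)"
    by (simp only: mconst_mult[symmetric] mult.assoc)
  finally have "to_K g = mconst (Fract d u) * f"
    using u(1) by simp
  moreover have "Fract d u \<noteq> 0"
    using d(1) u(1) by (simp add: Zero_fract_def eq_fract)
  ultimately show thesis
    using that u(3) by blast
qed

lemma to_K_associate_not_unit:
  assumes "to_K g = mconst c * f" and "\<not> (\<exists>u \<in> polys n. f * u = 1)"
  shows "\<not> (\<exists>v \<in> polys n. g * v = 1)"
proof
  assume "\<exists>v \<in> polys n. g * v = 1"
  then obtain v where v: "v \<in> polys n" "g * v = 1" by blast
  have "f * (mconst c * to_K v) = to_K (g * v)"
    by (simp only: to_K_mult assms(1) ac_simps)
  moreover have "mconst c * to_K v \<in> polys n"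
    using v(1) by (simp add: polys_mult mconst_polys)
  ultimately show False
    using assms(2) v(2) by auto
qed

lemma primitive_associate_dvd_descends:
  fixes g :: "'a::{factorial_semiring, idom} mpoly"
  assumes "primitive_mpoly g" "to_K g = mconst c * f" "c \<noteq> 0"
    and "h \<in> polys n" "to_K p = f * h"
  shows "\<exists>h1 \<in> polys n. p = g * h1"
proof -
  have "to_K g * (mconst (inverse c) * h) = (mconst (inverse c) * mconst c) * (f * h)"
    by (simp only: assms(2) mult.assoc mult.left_commute)
  also have "\<dots> = to_K p"
    by (simp only: mconst_mult left_inverse[OF assms(3)] mconst_1 mult_1_left assms(5))
  finally have quot: "to_K g * (mconst (inverse c) * h) = to_K p" .
  then obtain h1 where h1: "to_K h1 = mconst (inverse c) * h"
    using primitive_mpoly_gauss[OF assms(1)] by (metis rangeE)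
  have "to_K h1 \<in> polys n"
    unfolding h1 using mconst_polys assms(4) by (rule polys_mult)
  moreover have "to_K (g * h1) = to_K p"
    by (simp only: to_K_mult h1 quot)
  ultimately show ?thesis
    by (auto simp: to_K_inject)
qed

lemma reducible_der_of_extension:
  fixes D :: "'a::{factorial_semiring, idom} mpoly \<Rightarrow> 'a mpoly"
    and DK :: "'a fract mpoly \<Rightarrow> 'a fract mpoly"
  assumes ext: "\<forall>g \<in> polys n. DK (to_K g) = to_K (D g)" and "reducible_der n DK"
  shows "reducible_der n D"
proof -
  obtain f where f: "f \<in> polys n" "\<not> (\<exists>u \<in> polys n. f * u = 1)"
    and DK_image: "\<forall>g \<in> polys n. \<exists>h \<in> polys n. DK g = f * h"
    using assms(2) unfolding reducible_der_def by blast
  have image: "\<exists>h \<in> polys n. to_K (D g) = f * h" if "g \<in> polys n" for g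
  proof -
    have "to_K g \<in> polys n"
      using that by simp
    then obtain h where "h \<in> polys n" "DK (to_K g) = f * h"
      using DK_image by blast
    then show ?thesis
      using ext that by auto
  qed
  show ?thesis
  proof (cases "f = 0")
    case True
    have "D g = 0 * 0" if "g \<in> polys n" for g
    proof -
      have "to_K (D g) = to_K 0"
        using image[OF that] True by simp
      then show ?thesis
        unfolding to_K_inject by simp
    qed
    moreover have "(0 :: 'a mpoly) \<in> polys n"
      by (simp add: polys_def)
    ultimately show ?thesis
      unfolding reducible_der_def by (intro bexI[of _ 0] conjI) auto
  next
    case False
    then obtain g c where g: "c \<noteq> 0" "primitive_mpoly g" "to_K g = mconst c * f"
      by (rule to_K_primitive_associate)
    have "to_K g \<in> polys n"
      unfolding g(3) using mconst_polys f(1) by (rule polys_mult)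
    moreover have "\<not> (\<exists>v \<in> polys n. g * v = 1)"
      using g(3) f(2) by (rule to_K_associate_not_unit)
    moreover have "\<exists>h1 \<in> polys n. D p = g * h1" if "p \<in> polys n" for p
      using image[OF that] primitive_associate_dvd_descends[OF g(2,3,1)] by blast
    ultimately show ?thesis
      unfolding reducible_der_def to_K_polys_iff by blast
  qed
qed

theorem lemma4p1:
  fixes n :: nat
    and D :: "('a::{factorial_semiring, idom}) mpoly \<Rightarrow> 'a mpoly"
    and DK :: "'a fract mpoly \<Rightarrow> 'a fract mpoly"
  assumes contains_Q: "\<forall>m::nat. m \<noteq> 0 \<longrightarrow> is_unit (of_nat m :: 'a)"
    and D_LND: "is_LND n D"
    and DK_der: "is_R_derivation n DK"
    and DK_ext: "\<forall>f \<in> polys n. DK (to_K f) = to_K (D f)"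
    and D_irr: "irreducible_der n D"
  shows "irreducible_der n DK"
  using D_irr reducible_der_of_extension[OF DK_ext] unfolding irreducible_der_def by blast

end
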